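(* Let $\mathfrak{sp}(2,\mathbb{R})$, the basis $(e_I)_{I=1}^{10}$, the dual left-invariant coframe $(e^I)$ on $\mathbf{Sp}(2,\mathbb{R})$ and the distribution $D_l$ be as in the context. Consider symmetric bilinear forms $g=\sum_{\mu,\nu=1}^{7} g_{\mu\nu}\, e^\mu\odot e^\nu$ on $\mathbf{Sp}(2,\mathbb{R})$ with real constant coefficients $g_{\mu\nu}=g_{\nu\mu}$. Then $\mathcal{L}_X g=0$ for all vector fields $X$ in $D_l$ if and only if $$g=g_{22}(e^2)^2+2g_{24}e^2\odot e^4+g_{44}(e^4)^2+2g_{35}(e^3\odot e^5-e^1\odot e^7)+2g_{26}e^2\odot e^6+2g_{46}e^4 \odot e^6+g_{66}(e^6)^2$$ for some real constants $g_{22},g_{24},g_{44},g_{35},g_{26},g_{46},g_{66}$.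
   Context: Realize $\mathfrak{sp}(2,\mathbb{R})$ as the real $4\times 4$ matrices $$E=\begin{pmatrix} a_5&a_7&a_9&2a_{10}\\ -a_4&a_6&a_8&a_9\\ a_2&a_3&-a_6&-a_7\\ -2a_1&a_2&a_4&-a_5\end{pmatrix},\qquad a_I\in\mathbb{R},$$ with bracket the matrix commutator and basis $E_I=\partial E/\partial a_I$, $I=1,\dots,10$. Put $e_1=E_2,\ e_2=E_3,\ e_3=E_4,\ e_4=E_6,\ e_5=E_7,\ e_6=E_8,\ e_7=E_9,\ e_8=E_1,\ e_9=E_5,\ e_{10}=E_{10}$, regarded as left-invariant vector fields on $\mathbf{Sp}(2,\mathbb{R})$, and let $(e^I)$ be the dual left-invariant 1-forms ($e_I\lrcorner e^J=\delta^J_I$). They satisfy ${\rm d} e^1=-e^1\wedge(e^4+e^9)+e^2\wedge e^3-2e^5\wedge e^8$, ${\rm d} e^2=-2e^1\wedge e^5-2e^2\wedge e^4$, ${\rm d} e^3=-e^1\wedge e^6+e^3\wedge(e^4-e^9)-2e^7\wedge e^8$, ${\rm d} e^4=e^1\wedge e^7+e^2\wedge e^6+e^3\wedge e^5$, ${\rm d} e^5=2e^1\wedge e^{10}+e^2\wedge e^7+e^5\wedge (e^9-e^4)$, ${\rm d} e^6=2e^3\wedge e^7-2e^4\wedge e^6$, ${\rm d} e^7=2e^3\wedge e^{10}-e^5\wedge e^6+e^7\wedge (e^4+e^9)$, ${\rm d} e^8=-e^1\wedge e^3-2e^8\wedge e^9$, ${\rm d} e^9=e^1\wedge e^7-e^3\wedge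 e^5-4e^8\wedge e^{10}$, ${\rm d} e^{10}=-e^5\wedge e^7-2e^9\wedge e^{10}$. $D_l$ is the (integrable) rank-3 distribution on $\mathbf{Sp}(2,\mathbb{R})$ spanned by $e_8,e_9,e_{10}$, i.e. the annihilator of $e^1,\dots,e^7$; its leaves are the cosets of the subgroup $\mathbf{SL}(2,\mathbb{R})_l$ with Lie algebra $\mathrm{Span}(E_1,E_5,E_{10})$. Notation: $e^I\odot e^J=\tfrac12(e^I\otimes e^J+e^J\otimes e^I)$, $(e^I)^2=e^I\odot e^I$. *)

theory Defs
  imports "HOL-Analysis.Analysis"
begin

text \<open>A 4x4 real matrix from its entries indexed by rows/columns 1..4 (paper convention);
  row r of the paper corresponds to the index (of_nat r :: 4).\<close>
definition mk44 :: "(nat \<Rightarrow> nat \<Rightarrow> real) \<Rightarrow> real^4^4" where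
  "mk44 M = (\<chi> i j. \<Sum>r\<in>{1..4}. \<Sum>c\<in>{1..4}.
      (if i = of_nat r \<and> j = of_nat c then M r c else 0))"

definition spE :: "(nat \<Rightarrow> real) \<Rightarrow> real^4^4" where
  "spE a = mk44 (\<lambda>r c. [[a 5, a 7, a 9, 2 * a 10],
                         [- a 4, a 6, a 8, a 9],
                         [a 2, a 3, - a 6, - a 7],
                         [- 2 * a 1, a 2, a 4, - a 5]] ! (r - 1) ! (c - 1))"

definition EE :: "nat \<Rightarrow> real^4^4" where
  "EE I = spE (\<lambda>K. if K = I then 1 else 0)"

definition ent :: "real^4^4 \<Rightarrow> nat \<Rightarrow> nat \<Rightarrow> real" where
  "ent M r c = M $ of_nat r $ of_nat c"

text \<open>The coordinate a_K of an element of sp(2,R) (dual basis to E_I).\<close>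
definition acoord :: "nat \<Rightarrow> real^4^4 \<Rightarrow> real" where
  "acoord K M = (if K = 1 then - ent M 4 1 / 2
            else if K = 2 then ent M 3 1
            else if K = 3 then ent M 3 2
            else if K = 4 then ent M 4 3
            else if K = 5 then ent M 1 1
            else if K = 6 then ent M 2 2
            else if K = 7 then ent M 1 2
            else if K = 8 then ent M 2 3
            else if K = 9 then ent M 1 3
            else if K = 10 then ent M 1 4 / 2 else 0)"

definition sig :: "nat \<Rightarrow> nat" where
  "sig I = [2, 3, 4, 6, 7, 8, 9, 1, 5, 10] ! (I - 1)"

definition ebasis :: "nat \<Rightarrow> real^4^4" where
  "ebasis I = EE (sig I)"

definition ecoord :: "nat \<Rightarrow> real^4^4 \<Rightarrow> real" where
  "ecoord K M = acoord (sig K) M"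

definition strc :: "nat \<Rightarrow> nat \<Rightarrow> nat \<Rightarrow> real" where
  "strc I J K = ecoord K (ebasis I ** ebasis J - ebasis J ** ebasis I)"

text \<open>The symplectic form preserved by the group (its Lie algebra is exactly the set of E(a)).\<close>
definition Jsp :: "real^4^4" where
  "Jsp = mk44 (\<lambda>r c. [[0, 0, 0, 1], [0, 0, 1, 0], [0, -1, 0, 0], [-1, 0, 0, 0]] ! (r - 1) ! (c - 1))"

definition Sp2 :: "(real^4^4) set" where
  "Sp2 = {A. transpose A ** Jsp ** A = Jsp}"

text \<open>A vector field on Sp(2,R) is written X = sum_{I=1}^{10} x_I e_I with coefficient
  functions x_I (x :: nat => matrix => real); smooth functions on the closed submanifold
  Sp(2,R) are represented by (differentiable) functions on the ambient matrix space.\<close>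

definition vfield :: "(nat \<Rightarrow> real^4^4 \<Rightarrow> real) \<Rightarrow> bool" where
  "vfield x \<longleftrightarrow> (\<forall>I A. x I differentiable (at A))"

text \<open>Derivative of a function along the left-invariant field e_I at A: direction A * e_I.\<close>
definition eder :: "nat \<Rightarrow> (real^4^4 \<Rightarrow> real) \<Rightarrow> real^4^4 \<Rightarrow> real" where
  "eder I f A = frechet_derivative f (at A) (A ** ebasis I)"

definition vf_apply :: "(nat \<Rightarrow> real^4^4 \<Rightarrow> real) \<Rightarrow> (real^4^4 \<Rightarrow> real) \<Rightarrow> real^4^4 \<Rightarrow> real" where
  "vf_apply x f A = (\<Sum>I\<in>{1..10}. x I A * eder I f A)"

definition vf_bracket :: "(nat \<Rightarrow> real^4^4 \<Rightarrow> real) \<Rightarrow> (nat \<Rightarrow> real^4^4 \<Rightarrow> real)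
    \<Rightarrow> nat \<Rightarrow> real^4^4 \<Rightarrow> real" where
  "vf_bracket x y K A =
     (\<Sum>I\<in>{1..10}. x I A * eder I (y K) A - y I A * eder I (x K) A)
     + (\<Sum>I\<in>{1..10}. \<Sum>J\<in>{1..10}. x I A * y J A * strc I J K)"

text \<open>X lies in D_l = span(e_8, e_9, e_10): its e_1..e_7 components vanish.\<close>
definition in_Dl :: "(nat \<Rightarrow> real^4^4 \<Rightarrow> real) \<Rightarrow> bool" where
  "in_Dl x \<longleftrightarrow> (\<forall>I\<in>{1..7}. \<forall>A. x I A = 0)"

definition odot :: "nat \<Rightarrow> nat \<Rightarrow> (nat \<Rightarrow> real) \<Rightarrow> (nat \<Rightarrow> real) \<Rightarrow> real" where
  "odot I J v w = (v I * w J + v J * w I) / 2"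

definition symform :: "(nat \<Rightarrow> nat \<Rightarrow> real) \<Rightarrow> (nat \<Rightarrow> real) \<Rightarrow> (nat \<Rightarrow> real) \<Rightarrow> real" where
  "symform gc v w = (\<Sum>\<mu>\<in>{1..7}. \<Sum>\<nu>\<in>{1..7}. gc \<mu> \<nu> * odot \<mu> \<nu> v w)"

definition gvf :: "(nat \<Rightarrow> nat \<Rightarrow> real) \<Rightarrow> (nat \<Rightarrow> real^4^4 \<Rightarrow> real) \<Rightarrow> (nat \<Rightarrow> real^4^4 \<Rightarrow> real)
    \<Rightarrow> real^4^4 \<Rightarrow> real" where
  "gvf gc y z A = symform gc (\<lambda>I. y I A) (\<lambda>I. z I A)"

definition lie_deriv :: "(nat \<Rightarrow> nat \<Rightarrow> real) \<Rightarrow> (nat \<Rightarrow> real^4^4 \<Rightarrow> real)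
    \<Rightarrow> (nat \<Rightarrow> real^4^4 \<Rightarrow> real) \<Rightarrow> (nat \<Rightarrow> real^4^4 \<Rightarrow> real) \<Rightarrow> real^4^4 \<Rightarrow> real" where
  "lie_deriv gc x y z A =
     vf_apply x (gvf gc y z) A - gvf gc (vf_bracket x y) z A - gvf gc y (vf_bracket x z) A"

end

theory Submission
  imports Defs
begin

text \<open>For X in D_l the derivatives of the coefficients of Y and Z cancel by the Leibniz rule,
  so (L_X g)(Y, Z) = - g([X, Y], Z) - g(Y, [X, Z]) pointwise, and the condition becomes
  invariance of g on span(e_1, ..., e_7) under the adjoint action of
  sl(2) = span(e_8, e_9, e_10). Under it e_2, e_4, e_6 are trivial, while span(e_1, e_5) and
  span(e_3, e_7) are two copies of the standard representation: e_9 has weight -1 on e_1, e_3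
  and +1 on e_5, e_7, e_8 lowers e_5, e_7 to -2 e_1, -2 e_3 and e_10 raises e_1, e_3 to
  2 e_5, 2 e_7. The weights of e_9 kill every coefficient g_{\<mu>\<nu>} of nonzero total weight,
  and e_8 then leaves on the two standard representations only their symplectic pairing
  e^3 \<odot> e^5 - e^1 \<odot> e^7.\<close>

lemma atLeastAtMost_1_7: "{1..7::nat} = {1,2,3,4,5,6,7}" by (rule set_eqI) (simp; arith)
lemma atLeastAtMost_1_10: "{1..10::nat} = {1,2,3,4,5,6,7,8,9,10}" by (rule set_eqI) (simp; arith)

lemma ent_mk44:
  assumes "r \<in> {1..4}" "c \<in> {1..4}" shows "ent (mk44 M) r c = M r c"
proof -
  have "r \<in> {1,2,3,4}" "c \<in> {1,2,3,4}" using assms by auto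
  then show ?thesis
    by (elim insertE emptyE; simp add: ent_def mk44_def eval_nat_numeral)
qed

lemma ent_matrix_mult: "ent (A ** B) r c =
  ent A r 1 * ent B 1 c + ent A r 2 * ent B 2 c + ent A r 3 * ent B 3 c + ent A r 4 * ent B 4 c"
  unfolding ent_def matrix_matrix_mult_def
  by (simp add: sum_4 eval_nat_numeral)

lemma ent_diff: "ent (A - B) r c = ent A r c - ent B r c"
  unfolding ent_def by simp

lemma ebasis_spE: "ebasis I = spE (\<lambda>K. if K = sig I then 1 else 0)"
  unfolding ebasis_def EE_def ..

lemma sig_1_7: "K \<in> {1..7} \<Longrightarrow> sig K \<in> {2,3,4,6,7,8,9}"
  unfolding atLeastAtMost_1_7 by (elim insertE emptyE; simp add: sig_def)

lemmas acoord_commutator_simps =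
  acoord_def ent_diff ent_matrix_mult ebasis_spE spE_def ent_mk44 sig_def

lemma acoord_commutator_ebasis_8:
  "k \<in> {2,3,4,6,7,8,9} \<Longrightarrow> acoord k (ebasis 8 ** spE a - spE a ** ebasis 8) =
     (if k = 2 then -2 * a 7 else if k = 4 then -2 * a 9 else 0)"
  by (elim insertE emptyE; simp add: acoord_commutator_simps)

lemma acoord_commutator_ebasis_9:
  "k \<in> {2,3,4,6,7,8,9} \<Longrightarrow> acoord k (ebasis 9 ** spE a - spE a ** ebasis 9) =
     (if k = 2 \<or> k = 4 then - a k else if k = 7 \<or> k = 9 then a k else 0)"
  by (elim insertE emptyE; simp add: acoord_commutator_simps)

lemma acoord_commutator_ebasis_10:
  "k \<in> {2,3,4,6,7,8,9} \<Longrightarrow> acoord k (ebasis 10 ** spE a - spE a ** ebasis 10) =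
     (if k = 7 then 2 * a 2 else if k = 9 then 2 * a 4 else 0)"
  by (elim insertE emptyE; simp add: acoord_commutator_simps)

lemma strc_8:
  assumes "J \<in> {1..10}" "K \<in> {1..7}"
  shows "strc 8 J K = (if J = 5 \<and> K = 1 \<or> J = 7 \<and> K = 3 then -2 else 0)"
proof -
  have "strc 8 J K = (if sig K = 2 then -2 * of_bool (sig J = 7)
      else if sig K = 4 then -2 * of_bool (sig J = 9) else 0)"
    unfolding strc_def ecoord_def ebasis_spE[of J] acoord_commutator_ebasis_8[OF sig_1_7[OF assms(2)]]
    by simp
  then show ?thesis
    using assms unfolding atLeastAtMost_1_7 atLeastAtMost_1_10
    by (elim insertE emptyE; simp add: sig_def)
qed

definition e9_weight :: "nat \<Rightarrow> real" where
  "e9_weight K = (if K \<in> {1,3} then -1 else if K \<in> {5,7} then 1 else 0)"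

lemma strc_9:
  assumes "J \<in> {1..10}" "K \<in> {1..7}"
  shows "strc 9 J K = (if J = K then e9_weight K else 0)"
proof -
  have "strc 9 J K = (if sig K = 2 \<or> sig K = 4 then - of_bool (sig J = sig K)
      else if sig K = 7 \<or> sig K = 9 then of_bool (sig J = sig K) else 0)"
    unfolding strc_def ecoord_def ebasis_spE[of J] acoord_commutator_ebasis_9[OF sig_1_7[OF assms(2)]]
    by simp
  then show ?thesis
    using assms unfolding atLeastAtMost_1_7 atLeastAtMost_1_10
    by (elim insertE emptyE; simp add: sig_def e9_weight_def)
qed

lemma strc_10:
  assumes "J \<in> {1..10}" "K \<in> {1..7}"
  shows "strc 10 J K = (if J = 1 \<and> K = 5 \<or> J = 3 \<and> K = 7 then 2 else 0)"
proof -
  have "strc 10 J K = (if sig K = 7 then 2 * of_bool (sig J = 2)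
      else if sig K = 9 then 2 * of_bool (sig J = 4) else 0)"
    unfolding strc_def ecoord_def ebasis_spE[of J] acoord_commutator_ebasis_10[OF sig_1_7[OF assms(2)]]
    by simp
  then show ?thesis
    using assms unfolding atLeastAtMost_1_7 atLeastAtMost_1_10
    by (elim insertE emptyE; simp add: sig_def)
qed

definition Dl_ad :: "(nat \<Rightarrow> real) \<Rightarrow> (nat \<Rightarrow> real) \<Rightarrow> nat \<Rightarrow> real" where
  "Dl_ad X Y K = X 9 * e9_weight K * Y K
     + X 8 * (if K = 1 then -2 * Y 5 else if K = 3 then -2 * Y 7 else 0)
     + X 10 * (if K = 5 then 2 * Y 1 else if K = 7 then 2 * Y 3 else 0)"

lemma sum_strc_eq_Dl_ad:
  assumes "\<And>I. I \<in> {1..7} \<Longrightarrow> X I = 0" and "K \<in> {1..7}"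
  shows "(\<Sum>I\<in>{1..10}. \<Sum>J\<in>{1..10}. X I * Y J * strc I J K) = Dl_ad X Y K"
proof -
  have "(\<Sum>I\<in>{1..10}. \<Sum>J\<in>{1..10}. X I * Y J * strc I J K)
      = X 8 * (\<Sum>J\<in>{1..10}. Y J * strc 8 J K) + X 9 * (\<Sum>J\<in>{1..10}. Y J * strc 9 J K)
        + X 10 * (\<Sum>J\<in>{1..10}. Y J * strc 10 J K)"
    using assms(1) unfolding atLeastAtMost_1_10
    by (simp add: atLeastAtMost_1_7 distrib_left mult.assoc)
  also have "\<dots> = Dl_ad X Y K"
    using assms(2) unfolding atLeastAtMost_1_10 atLeastAtMost_1_7
    by (elim insertE emptyE; simp add: strc_8 strc_9 strc_10 Dl_ad_def e9_weight_def)
  finally show ?thesis .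
qed

lemma symform_cong:
  assumes "\<And>K. K \<in> {1..7} \<Longrightarrow> v K = v' K" and "\<And>K. K \<in> {1..7} \<Longrightarrow> w K = w' K"
  shows "symform gc v w = symform gc v' w'"
  unfolding symform_def odot_def using assms by (intro sum.cong refl) auto

lemma symform_add_left: "symform gc (\<lambda>K. u K + v K) w = symform gc u w + symform gc v w"
  unfolding symform_def odot_def
  by (simp add: sum.distrib[symmetric] algebra_simps add_divide_distrib)

lemma symform_add_right: "symform gc u (\<lambda>K. v K + w K) = symform gc u v + symform gc u w"
  unfolding symform_def odot_def
  by (simp add: sum.distrib[symmetric] algebra_simps add_divide_distrib)

lemma symform_scale_left: "symform gc (\<lambda>K. c * v K) w = c * symform gc v w"
  unfolding symform_def odot_def
  by (simp add: sum_distrib_left algebra_simps)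

lemma symform_scale_right: "symform gc v (\<lambda>K. c * w K) = c * symform gc v w"
  unfolding symform_def odot_def
  by (simp add: sum_distrib_left algebra_simps)

lemma symform_sum_left:
  "symform gc (\<lambda>K. \<Sum>I\<in>S. c I * f I K) w = (\<Sum>I\<in>S. c I * symform gc (f I) w)"
  unfolding symform_def odot_def
  by (simp add: sum_distrib_left sum_distrib_right sum_divide_distrib sum.distrib[symmetric]
      algebra_simps sum.swap[of _ S])

lemma symform_sum_right:
  "symform gc v (\<lambda>K. \<Sum>I\<in>S. c I * f I K) = (\<Sum>I\<in>S. c I * symform gc v (f I))"
  unfolding symform_def odot_def
  by (simp add: sum_distrib_left sum_distrib_right sum_divide_distrib sum.distrib[symmetric]
      algebra_simps sum.swap[of _ S])

definition frame_unit :: "nat \<Rightarrow> nat \<Rightarrow> real" where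
  "frame_unit k K = of_bool (K = k)"

lemma symform_frame_units:
  assumes "i \<in> {1..7}" "j \<in> {1..7}"
  shows "symform gc (frame_unit i) (frame_unit j) = (gc i j + gc j i) / 2"
proof -
  have delta: "(\<Sum>\<mu>\<in>{1..7}. \<Sum>\<nu>\<in>{1..7}. gc \<mu> \<nu> * (of_bool (\<mu> = a) * of_bool (\<nu> = b))) = gc a b"
    if "a \<in> {1..7}" "b \<in> {1..7}" for a b
  proof -
    have "(\<Sum>\<mu>\<in>{1..7}. \<Sum>\<nu>\<in>{1..7}. gc \<mu> \<nu> * (of_bool (\<mu> = a) * of_bool (\<nu> = b)))
        = (\<Sum>\<mu>\<in>{1..7}. \<Sum>\<nu>\<in>{1..7}. if \<nu> = b then (if \<mu> = a then gc a b else 0) else 0)"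
      by (intro sum.cong) auto
    then show ?thesis using that by simp
  qed
  show ?thesis
    unfolding symform_def odot_def frame_unit_def
    using delta[OF assms] delta[OF assms(2,1)]
    by (simp add: add_divide_distrib distrib_left sum.distrib sum_divide_distrib[symmetric] mult.commute)
qed

lemma has_derivative_symform:
  assumes "\<And>K. (y K has_derivative Dy K) (at A within S)"
    and "\<And>K. (z K has_derivative Dz K) (at A within S)"
  shows "((\<lambda>B. symform gc (\<lambda>K. y K B) (\<lambda>K. z K B)) has_derivative
     (\<lambda>h. symform gc (\<lambda>K. Dy K h) (\<lambda>K. z K A) + symform gc (\<lambda>K. y K A) (\<lambda>K. Dz K h)))
     (at A within S)"
  unfolding symform_def odot_def
  apply (rule has_derivative_eq_rhs)
   apply (rule assms | rule derivative_eq_intros | rule refl | simp)+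
  apply (rule ext)
  apply (simp add: sum.distrib[symmetric] algebra_simps add_divide_distrib)
  done

lemma eder_gvf:
  assumes "vfield y" "vfield z"
  shows "eder I (gvf gc y z) A = symform gc (\<lambda>K. eder I (y K) A) (\<lambda>K. z K A)
     + symform gc (\<lambda>K. y K A) (\<lambda>K. eder I (z K) A)"
proof -
  have "\<And>K. (y K has_derivative frechet_derivative (y K) (at A)) (at A)"
    "\<And>K. (z K has_derivative frechet_derivative (z K) (at A)) (at A)"
    using assms unfolding vfield_def by (simp_all add: frechet_derivative_works)
  from has_derivative_symform[OF this, of gc]
  have "frechet_derivative (gvf gc y z) (at A) =
     (\<lambda>h. symform gc (\<lambda>K. frechet_derivative (y K) (at A) h) (\<lambda>K. z K A)
        + symform gc (\<lambda>K. y K A) (\<lambda>K. frechet_derivative (z K) (at A) h))"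
    unfolding gvf_def[abs_def] by (rule frechet_derivative_at[symmetric])
  then show ?thesis unfolding eder_def by simp
qed

text \<open>The derivatives of x never enter: x has no e_1, ..., e_7 components and g only sees
  those.\<close>
lemma lie_deriv_Dl:
  assumes x: "vfield x" "in_Dl x" and y: "vfield y" and z: "vfield z"
  shows "lie_deriv gc x y z A =
    - symform gc (Dl_ad (\<lambda>I. x I A) (\<lambda>K. y K A)) (\<lambda>K. z K A)
    - symform gc (\<lambda>K. y K A) (Dl_ad (\<lambda>I. x I A) (\<lambda>K. z K A))"
proof -
  have x0: "x K = (\<lambda>_. 0)" if "K \<in> {1..7}" for K
    using x(2) that unfolding in_Dl_def by auto
  have bracket: "vf_bracket x w K A = (\<Sum>I\<in>{1..10}. x I A * eder I (w K) A)
      + Dl_ad (\<lambda>I. x I A) (\<lambda>J. w J A) K" if "K \<in> {1..7}" for w K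
    using that x0 sum_strc_eq_Dl_ad[of "\<lambda>I. x I A", OF _ that] by (simp add: vf_bracket_def eder_def)
  define Y Z where "Y = (\<lambda>K. y K A)" and "Z = (\<lambda>K. z K A)"
  have "gvf gc (vf_bracket x y) z A
      = symform gc (\<lambda>K. (\<Sum>I\<in>{1..10}. x I A * eder I (y K) A) + Dl_ad (\<lambda>I. x I A) Y K) Z"
    unfolding gvf_def Y_def Z_def by (rule symform_cong) (simp_all add: bracket)
  moreover have "gvf gc y (vf_bracket x z) A
      = symform gc Y (\<lambda>K. (\<Sum>I\<in>{1..10}. x I A * eder I (z K) A) + Dl_ad (\<lambda>I. x I A) Z K)"
    unfolding gvf_def Y_def Z_def by (rule symform_cong) (simp_all add: bracket)
  moreover have "vf_apply x (gvf gc y z) A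
      = (\<Sum>I\<in>{1..10}. x I A * symform gc (\<lambda>K. eder I (y K) A) Z)
        + (\<Sum>I\<in>{1..10}. x I A * symform gc Y (\<lambda>K. eder I (z K) A))"
    unfolding vf_apply_def eder_gvf[OF y z] Y_def Z_def by (simp add: sum.distrib ring_distribs)
  ultimately show ?thesis
    unfolding lie_deriv_def Y_def[symmetric] Z_def[symmetric]
    by (simp add: symform_add_left symform_add_right symform_sum_left symform_sum_right)
qed

definition Dl_invariant :: "(nat \<Rightarrow> nat \<Rightarrow> real) \<Rightarrow> bool" where
  "Dl_invariant gc \<longleftrightarrow>
     (\<forall>X v w. symform gc (Dl_ad X v) w + symform gc v (Dl_ad X w) = 0)"

lemma mat_1_in_Sp2: "mat 1 \<in> Sp2"
  unfolding Sp2_def by (simp add: transpose_mat matrix_mul_lid matrix_mul_rid)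

lemma lie_deriv_Dl_vanishes_iff:
  "(\<forall>x y z. vfield x \<and> in_Dl x \<and> vfield y \<and> vfield z \<longrightarrow> (\<forall>A\<in>Sp2. lie_deriv gc x y z A = 0))
   \<longleftrightarrow> Dl_invariant gc"
proof
  assume vanish: "\<forall>x y z. vfield x \<and> in_Dl x \<and> vfield y \<and> vfield z \<longrightarrow>
    (\<forall>A\<in>Sp2. lie_deriv gc x y z A = 0)"
  show "Dl_invariant gc"
    unfolding Dl_invariant_def
  proof (intro allI)
    fix X v w :: "nat \<Rightarrow> real"
    define x where "x = (\<lambda>I (_::real^4^4). if I \<in> {1..7} then 0 else X I)"
    have fields: "vfield x" "in_Dl x" "vfield (\<lambda>K _. v K)" "vfield (\<lambda>K _. w K)"
      unfolding x_def vfield_def in_Dl_def by simp_all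
    have "Dl_ad (\<lambda>I. x I (mat 1)) = Dl_ad X"
      unfolding x_def Dl_ad_def by (simp add: fun_eq_iff)
    then show "symform gc (Dl_ad X v) w + symform gc v (Dl_ad X w) = 0"
      using vanish fields mat_1_in_Sp2 lie_deriv_Dl[OF fields, of gc "mat 1"] by auto
  qed
next
  assume "Dl_invariant gc"
  show "\<forall>x y z. vfield x \<and> in_Dl x \<and> vfield y \<and> vfield z \<longrightarrow>
    (\<forall>A\<in>Sp2. lie_deriv gc x y z A = 0)"
  proof (intro allI impI ballI)
    fix x y z A
    assume "vfield x \<and> in_Dl x \<and> vfield y \<and> vfield z"
    then show "lie_deriv gc x y z A = 0"
      using \<open>Dl_invariant gc\<close> unfolding Dl_invariant_def
      by (simp add: lie_deriv_Dl add_eq_0_iff)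
  qed
qed

lemma Dl_invariant_weight:
  assumes "Dl_invariant gc" "i \<in> {1..7}" "j \<in> {1..7}"
  shows "(e9_weight i + e9_weight j) * (gc i j + gc j i) = 0"
proof -
  have weight: "Dl_ad (frame_unit 9) (frame_unit k) = (\<lambda>K. e9_weight k * frame_unit k K)" for k
    by (auto simp: Dl_ad_def frame_unit_def)
  have inv: "symform gc (Dl_ad (frame_unit 9) v) w + symform gc v (Dl_ad (frame_unit 9) w) = 0"
    for v w
    using assms(1) unfolding Dl_invariant_def by blast
  show ?thesis
    using inv[of "frame_unit i" "frame_unit j"] symform_frame_units[OF assms(2,3), of gc]
    unfolding weight symform_scale_left symform_scale_right by (simp add: field_simps)
qed

lemma Dl_invariant_lowering:
  assumes "Dl_invariant gc"
  shows "gc 1 5 + gc 5 1 = 0" "gc 3 7 + gc 7 3 = 0" "gc 1 7 + gc 7 1 + gc 3 5 + gc 5 3 = 0"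
proof -
  have lower: "Dl_ad (frame_unit 8) (frame_unit 5) = (\<lambda>K. -2 * frame_unit 1 K)"
      "Dl_ad (frame_unit 8) (frame_unit 7) = (\<lambda>K. -2 * frame_unit 3 K)"
    by (auto simp: Dl_ad_def frame_unit_def)
  have inv: "symform gc (Dl_ad (frame_unit 8) v) w + symform gc v (Dl_ad (frame_unit 8) w) = 0"
    for v w
    using assms unfolding Dl_invariant_def by blast
  note units = symform_frame_units[of _ _ gc]
  show "gc 1 5 + gc 5 1 = 0"
    using inv[of "frame_unit 5" "frame_unit 5"] units[of 1 5] units[of 5 1]
    unfolding lower symform_scale_left symform_scale_right by (simp add: field_simps)
  show "gc 3 7 + gc 7 3 = 0"
    using inv[of "frame_unit 7" "frame_unit 7"] units[of 3 7] units[of 7 3]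
    unfolding lower symform_scale_left symform_scale_right by (simp add: field_simps)
  show "gc 1 7 + gc 7 1 + gc 3 5 + gc 5 3 = 0"
    using inv[of "frame_unit 5" "frame_unit 7"] units[of 1 7] units[of 5 3]
    unfolding lower symform_scale_left symform_scale_right by (simp add: field_simps)
qed

lemma Dl_invariant_iff:
  assumes sym: "\<forall>\<mu>\<in>{1..7}. \<forall>\<nu>\<in>{1..7}. gc \<mu> \<nu> = gc \<nu> \<mu>"
  shows "Dl_invariant gc \<longleftrightarrow>
    (\<exists>g22 g24 g44 g35 g26 g46 g66 :: real. \<forall>v w.
       symform gc v w =
         g22 * odot 2 2 v w + 2 * g24 * odot 2 4 v w + g44 * odot 4 4 v w
         + 2 * g35 * (odot 3 5 v w - odot 1 7 v w) + 2 * g26 * odot 2 6 v w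
         + 2 * g46 * odot 4 6 v w + g66 * odot 6 6 v w)"
    (is "_ \<longleftrightarrow> (\<exists>g22 g24 g44 g35 g26 g46 g66. \<forall>v w. _ = ?form g22 g24 g44 g35 g26 g46 g66 v w)")
proof
  assume inv: "Dl_invariant gc"
  have gc_sym: "gc j i = gc i j" if "i \<in> {1..7}" "j \<in> {1..7}" for i j
    using sym that by auto
  have zero: "gc i j = 0" if "i \<in> {1..7}" "j \<in> {1..7}" "e9_weight i + e9_weight j \<noteq> 0" for i j
    using Dl_invariant_weight[OF inv that(1,2)] gc_sym[OF that(1,2)] that(3) by simp
  have lowering: "gc 1 5 = 0" "gc 5 1 = 0" "gc 3 7 = 0" "gc 7 3 = 0"
      "gc 1 7 = - gc 3 5" "gc 7 1 = - gc 3 5"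
    using Dl_invariant_lowering[OF inv] gc_sym[of 1 5] gc_sym[of 3 7] gc_sym[of 1 7] gc_sym[of 3 5]
    by simp_all
  have pairs: "gc 4 2 = gc 2 4" "gc 6 2 = gc 2 6" "gc 6 4 = gc 4 6" "gc 5 3 = gc 3 5"
    by (simp_all add: gc_sym)
  have "symform gc v w = ?form (gc 2 2) (gc 2 4) (gc 4 4) (gc 3 5) (gc 2 6) (gc 4 6) (gc 6 6) v w"
    for v w
    unfolding symform_def atLeastAtMost_1_7
    by (simp add: zero lowering lowering[unfolded One_nat_def] pairs e9_weight_def odot_def
        algebra_simps add_divide_distrib diff_divide_distrib)
  then show "\<exists>g22 g24 g44 g35 g26 g46 g66. \<forall>v w. symform gc v w = ?form g22 g24 g44 g35 g26 g46 g66 v w"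
    by blast
next
  assume "\<exists>g22 g24 g44 g35 g26 g46 g66. \<forall>v w. symform gc v w = ?form g22 g24 g44 g35 g26 g46 g66 v w"
  then obtain g22 g24 g44 g35 g26 g46 g66
    where form: "\<And>v w. symform gc v w = ?form g22 g24 g44 g35 g26 g46 g66 v w" by blast
  show "Dl_invariant gc"
    unfolding Dl_invariant_def form by (simp add: Dl_ad_def e9_weight_def odot_def field_simps)
qed

theorem proposition3p1:
  fixes gc :: "nat \<Rightarrow> nat \<Rightarrow> real"
  assumes sym: "\<forall>\<mu>\<in>{1..7}. \<forall>\<nu>\<in>{1..7}. gc \<mu> \<nu> = gc \<nu> \<mu>"
  shows "(\<forall>x y z. vfield x \<and> in_Dl x \<and> vfield y \<and> vfield z \<longrightarrow>
             (\<forall>A\<in>Sp2. lie_deriv gc x y z A = 0))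
         \<longleftrightarrow>
         (\<exists>g22 g24 g44 g35 g26 g46 g66 :: real. \<forall>v w.
             symform gc v w =
               g22 * odot 2 2 v w + 2 * g24 * odot 2 4 v w + g44 * odot 4 4 v w
               + 2 * g35 * (odot 3 5 v w - odot 1 7 v w) + 2 * g26 * odot 2 6 v w
               + 2 * g46 * odot 4 6 v w + g66 * odot 6 6 v w)"
  unfolding lie_deriv_Dl_vanishes_iff using Dl_invariant_iff[OF sym] .

end
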